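(* Let $N$ be a positive even integer, $M_t$ a positive integer, and $\theta\in\mathbb R$. Let $\hat{\mathbf G}_t\in\mathbb C^{N\times M_t}$ be a random matrix with i.i.d. circularly symmetric complex Gaussian entries of zero mean and unit variance, and let $\gamma_2^\star=\max_{\mathbf\Phi}\|\hat{\mathbf G}_t^T\mathbf\Phi^T\mathbf a(\theta)\|^2$, the maximum over all $\mathbf\Phi=\mathrm{diag}(e^{j\phi_1},\dots,e^{j\phi_N})$ with $\phi_n\in\mathbb R$. Then $\frac{\pi N(N-1)}{4}+M_tN\le\mathbb E[\gamma_2^\star]\le M_tN^2.$
   Context: $j=\sqrt{-1}$. Fix $\hat d>0$, $\lambda>0$; $\mathbf a(\theta)\in\mathbb C^N$ is the steering vector with $n$-th entry $e^{j\pi(2n-N-1)\hat d\sin\theta/\lambda}$, $n=1,\dots,N$. *)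

theory Defs
  imports "HOL-Probability.Probability"
begin

definition steering :: "real \<Rightarrow> real \<Rightarrow> nat \<Rightarrow> real \<Rightarrow> nat \<Rightarrow> complex" where
  "steering dhat lam N \<theta> n =
     cis (pi * (2 * real n - real N - 1) * dhat * sin \<theta> / lam)"

definition std_cgauss_density :: "complex \<Rightarrow> real" where
  "std_cgauss_density z = exp (- (cmod z)\<^sup>2) / pi"

text \<open>||G^T Phi^T a(theta)||^2 for Phi = diag(e^{j phi_1},...,e^{j phi_N});
  G is N x M_t with entries G n k, n = 1..N, k = 1..M_t.\<close>
definition beam_gain :: "(nat \<Rightarrow> nat \<Rightarrow> complex) \<Rightarrow> real \<Rightarrow> real \<Rightarrow> nat \<Rightarrow> nat \<Rightarrow> real
    \<Rightarrow> (nat \<Rightarrow> real) \<Rightarrow> real" where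
  "beam_gain G dhat lam N Mt \<theta> \<phi> =
     (\<Sum>k=1..Mt. (cmod (\<Sum>n=1..N. G n k * cis (\<phi> n) * steering dhat lam N \<theta> n))\<^sup>2)"

definition gamma2_star :: "(nat \<Rightarrow> nat \<Rightarrow> complex) \<Rightarrow> real \<Rightarrow> real \<Rightarrow> nat \<Rightarrow> nat \<Rightarrow> real \<Rightarrow> real" where
  "gamma2_star G dhat lam N Mt \<theta> = (SUP \<phi>. beam_gain G dhat lam N Mt \<theta> \<phi>)"

end

theory Submission
  imports Defs "HOL-Real_Asymp.Real_Asymp"
begin

text \<open>Upper bound: for every phase vector, the triangle inequality and Cauchy-Schwarz bound the
  gain by N times the squared Frobenius norm of G, whose mean is Mt N^2; this also gives
  integrability.
  Lower bound: choose the phases with e^(j phi_n) a_n(theta) = conj(G_n1) / |G_n1|, which co-phase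
  the first column. The k = 1 term of the gain becomes (sum_n |G_n1|)^2, of mean
  N + N (N - 1) (E|g|)^2 = N + N (N - 1) pi / 4. For k >= 2 the column G_k is centred and
  independent of these phases, so the cross terms vanish and the term has mean N. The moments
  E|g| = sqrt pi / 2 and E|g|^2 = 1 are computed radially from the mass pi exp(-t^2) of
  exp(-|z|^2) outside the disc of radius t.
  The maximum over the phases is measurable because it is a supremum over countably many rational
  phase vectors.\<close>

section \<open>Radial integrals and moments of the standard complex Gaussian\<close>

lemma nn_integral_Rayleigh_tail:
  fixes a :: real
  assumes "0 \<le> a"
  shows "(\<integral>\<^sup>+r. ennreal (2 * r * exp (- r\<^sup>2)) * indicator {a..} r \<partial>lborel) = ennreal (exp (- a\<^sup>2))"
proof -
  have "(\<integral>\<^sup>+r. ennreal (2 * r * exp (- r\<^sup>2)) * indicator {a..} r \<partial>lborel) = 0 - (- exp (- a\<^sup>2))"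
  proof (rule nn_integral_FTC_atLeast)
    show "((\<lambda>r::real. - exp (- r\<^sup>2)) \<longlongrightarrow> 0) at_top"
      by real_asymp
  qed (use assms in \<open>auto intro!: derivative_eq_intros\<close>)
  then show ?thesis
    by simp
qed

lemma emeasure_cmod_annulus:
  fixes t r :: real
  assumes "0 \<le> t" "t \<le> r"
  shows "emeasure lborel {z::complex. t \<le> cmod z \<and> cmod z \<le> r} = ennreal (pi * (r\<^sup>2 - t\<^sup>2))"
proof -
  have "{z::complex. t \<le> cmod z \<and> cmod z \<le> r} = cball 0 r - ball 0 t"
    by (auto simp: dist_norm)
  moreover have "emeasure lborel (cball (0::complex) r - ball 0 t) = ennreal (pi * r\<^sup>2) - ennreal (pi * t\<^sup>2)"
    using assms by (subst emeasure_Diff) (auto simp: emeasure_ball emeasure_cball unit_ball_vol_2)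
  moreover have "ennreal (pi * r\<^sup>2) - ennreal (pi * t\<^sup>2) = ennreal (pi * (r\<^sup>2 - t\<^sup>2))"
    using assms by (subst ennreal_minus) (auto simp: algebra_simps intro!: power_mono)
  ultimately show ?thesis
    by simp
qed

text \<open>Write exp(-|z|^2) as the integral of 2 r exp(-r^2) over r >= |z| and swap the integrals:
  the inner integral becomes the area pi (r^2 - t^2) of an annulus.\<close>

lemma nn_integral_exp_neg_cmod_sq_tail:
  fixes t :: real
  assumes "0 \<le> t"
  shows "(\<integral>\<^sup>+z. ennreal (exp (- (cmod z)\<^sup>2)) * indicator {z::complex. t \<le> cmod z} z \<partial>lborel)
    = ennreal (pi * exp (- t\<^sup>2))"
proof -
  have pair_lborel: "pair_sigma_finite (lborel :: complex measure) (lborel :: real measure)"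
    by (intro pair_sigma_finite.intro) (simp_all add: sigma_finite_lborel)
  define F where "F p = ennreal (2 * snd p * exp (- (snd p)\<^sup>2))
      * indicator {p. t \<le> cmod (fst p) \<and> cmod (fst p) \<le> snd p} p" for p :: "complex \<times> real"
  have [measurable]: "F \<in> borel_measurable (lborel \<Otimes>\<^sub>M lborel)"
    unfolding F_def by measurable
  have "(\<integral>\<^sup>+z. ennreal (exp (- (cmod z)\<^sup>2)) * indicator {z::complex. t \<le> cmod z} z \<partial>lborel)
      = (\<integral>\<^sup>+z. (\<integral>\<^sup>+r. F (z, r) \<partial>lborel) \<partial>lborel)"
  proof (rule nn_integral_cong)
    fix z :: complex
    have "(\<integral>\<^sup>+r. F (z, r) \<partial>lborel)
        = (\<integral>\<^sup>+r. ennreal (2 * r * exp (- r\<^sup>2)) * indicator {cmod z..} r \<partial>lborel)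
          * indicator {z::complex. t \<le> cmod z} z"
      by (subst nn_integral_multc[symmetric]) (auto intro!: nn_integral_cong simp: F_def split: split_indicator)
    then show "ennreal (exp (- (cmod z)\<^sup>2)) * indicator {z. t \<le> cmod z} z = (\<integral>\<^sup>+r. F (z, r) \<partial>lborel)"
      by (simp add: nn_integral_Rayleigh_tail)
  qed
  also have "\<dots> = (\<integral>\<^sup>+r. (\<integral>\<^sup>+z. F (z, r) \<partial>lborel) \<partial>lborel)"
    by (rule pair_sigma_finite.Fubini[OF pair_lborel, symmetric]) measurable
  also have "\<dots> = (\<integral>\<^sup>+r. ennreal (2 * r * exp (- r\<^sup>2) * (pi * (r\<^sup>2 - t\<^sup>2))) * indicator {t..} r \<partial>lborel)"
  proof (rule nn_integral_cong)
    fix r :: real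
    have "(\<integral>\<^sup>+z. F (z, r) \<partial>lborel)
        = ennreal (2 * r * exp (- r\<^sup>2)) * emeasure lborel {z::complex. t \<le> cmod z \<and> cmod z \<le> r}"
      by (subst nn_integral_cmult_indicator[symmetric])
        (auto intro!: nn_integral_cong simp: F_def split: split_indicator)
    moreover have "r < t \<Longrightarrow> {z::complex. t \<le> cmod z \<and> cmod z \<le> r} = {}"
      by auto
    ultimately show "(\<integral>\<^sup>+z. F (z, r) \<partial>lborel) = ennreal (2 * r * exp (- r\<^sup>2) * (pi * (r\<^sup>2 - t\<^sup>2))) * indicator {t..} r"
      using assms by (cases "t \<le> r") (auto simp: emeasure_cmod_annulus ennreal_mult[symmetric])
  qed
  also have "\<dots> = 0 - (- pi * (t\<^sup>2 - t\<^sup>2 + 1) * exp (- t\<^sup>2))"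
  proof (rule nn_integral_FTC_atLeast[where F="\<lambda>r. - pi * (r\<^sup>2 - t\<^sup>2 + 1) * exp (- r\<^sup>2)"])
    show "((\<lambda>r::real. - pi * (r\<^sup>2 - t\<^sup>2 + 1) * exp (- r\<^sup>2)) \<longlongrightarrow> 0) at_top"
      by real_asymp
    show "0 \<le> 2 * r * exp (- r\<^sup>2) * (pi * (r\<^sup>2 - t\<^sup>2))" if "t \<le> r" for r
      using assms that by (auto intro!: mult_nonneg_nonneg power_mono)
  qed (auto intro!: derivative_eq_intros simp: algebra_simps power2_eq_square)
  finally show ?thesis
    by simp
qed

lemma nn_integral_exp_neg_cmod_sq_layer_cake:
  fixes w :: "real \<Rightarrow> real"
  assumes [measurable]: "w \<in> borel_measurable borel"
  shows "(\<integral>\<^sup>+z. ennreal (exp (- (cmod z)\<^sup>2)) * (\<integral>\<^sup>+s. ennreal (w s) * indicator {0..cmod z} s \<partial>lborel)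
      \<partial>(lborel::complex measure))
    = (\<integral>\<^sup>+s. ennreal (w s) * indicator {0..} s * ennreal (pi * exp (- s\<^sup>2)) \<partial>lborel)"
proof -
  have pair_lborel: "pair_sigma_finite (lborel :: complex measure) (lborel :: real measure)"
    by (intro pair_sigma_finite.intro) (simp_all add: sigma_finite_lborel)
  define H where "H p = ennreal (exp (- (cmod (fst p))\<^sup>2)) * ennreal (w (snd p))
      * indicator {p. 0 \<le> snd p \<and> snd p \<le> cmod (fst p)} p" for p :: "complex \<times> real"
  have [measurable]: "H \<in> borel_measurable (lborel \<Otimes>\<^sub>M lborel)"
    unfolding H_def by measurable
  have "(\<integral>\<^sup>+z. ennreal (exp (- (cmod z)\<^sup>2)) * (\<integral>\<^sup>+s. ennreal (w s) * indicator {0..cmod z} s \<partial>lborel)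
      \<partial>(lborel::complex measure)) = (\<integral>\<^sup>+z. (\<integral>\<^sup>+s. H (z, s) \<partial>lborel) \<partial>lborel)"
    by (intro nn_integral_cong, subst nn_integral_cmult[symmetric])
      (auto intro!: nn_integral_cong simp: H_def split: split_indicator)
  also have "\<dots> = (\<integral>\<^sup>+s. (\<integral>\<^sup>+z. H (z, s) \<partial>lborel) \<partial>lborel)"
    by (rule pair_sigma_finite.Fubini[OF pair_lborel, symmetric]) measurable
  also have "\<dots> = (\<integral>\<^sup>+s. ennreal (w s) * indicator {0..} s * ennreal (pi * exp (- s\<^sup>2)) \<partial>lborel)"
  proof (rule nn_integral_cong)
    fix s :: real
    have "(\<integral>\<^sup>+z. H (z, s) \<partial>lborel) = (ennreal (w s) * indicator {0..} s)
        * (\<integral>\<^sup>+z. ennreal (exp (- (cmod z)\<^sup>2)) * indicator {z::complex. s \<le> cmod z} z \<partial>lborel)"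
      by (subst nn_integral_cmult[symmetric]) (auto intro!: nn_integral_cong simp: H_def mult_ac split: split_indicator)
    then show "(\<integral>\<^sup>+z. H (z, s) \<partial>lborel) = ennreal (w s) * indicator {0..} s * ennreal (pi * exp (- s\<^sup>2))"
      by (cases "0 \<le> s") (auto simp: nn_integral_exp_neg_cmod_sq_tail)
  qed
  finally show ?thesis .
qed

lemma std_cgauss_density_nonneg [simp]: "0 \<le> std_cgauss_density z"
  by (simp add: std_cgauss_density_def)

lemma borel_measurable_std_cgauss_density [measurable]: "std_cgauss_density \<in> borel_measurable borel"
  unfolding std_cgauss_density_def[abs_def] by measurable

lemma has_bochner_integral_std_cgauss_cmod:
  "has_bochner_integral lborel (\<lambda>z. std_cgauss_density z * cmod z) (sqrt pi / 2)"
proof (rule has_bochner_integral_nn_integral)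
  have "(\<integral>\<^sup>+z. ennreal (std_cgauss_density z * cmod z) \<partial>lborel)
      = ennreal (1 / pi) * (\<integral>\<^sup>+z. ennreal (exp (- (cmod z)\<^sup>2))
          * (\<integral>\<^sup>+s. ennreal 1 * indicator {0..cmod z} s \<partial>lborel) \<partial>(lborel::complex measure))"
    by (subst nn_integral_cmult[symmetric])
      (auto intro!: nn_integral_cong simp: std_cgauss_density_def ennreal_mult[symmetric])
  also have "\<dots> = ennreal (1 / pi) * (\<integral>\<^sup>+s. ennreal 1 * indicator {0..} s * ennreal (pi * exp (- s\<^sup>2)) \<partial>lborel)"
    by (subst nn_integral_exp_neg_cmod_sq_layer_cake) auto
  also have "\<dots> = (\<integral>\<^sup>+s. ennreal (indicator {0..} s *\<^sub>R exp (- s\<^sup>2)) \<partial>lborel)"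
    by (subst nn_integral_cmult[symmetric])
      (auto intro!: nn_integral_cong simp: ennreal_mult[symmetric] split: split_indicator)
  also have "\<dots> = ennreal (sqrt pi / 2)"
    using gaussian_moment_0 by (subst nn_integral_eq_integrable) (auto simp: has_bochner_integral_iff)
  finally show "(\<integral>\<^sup>+z. ennreal (std_cgauss_density z * cmod z) \<partial>lborel) = ennreal (sqrt pi / 2)" .
qed auto

lemma has_bochner_integral_std_cgauss_cmod_sq:
  "has_bochner_integral lborel (\<lambda>z. std_cgauss_density z * (cmod z)\<^sup>2) 1"
proof (rule has_bochner_integral_nn_integral)
  have sq: "(\<integral>\<^sup>+s. ennreal (2 * s) * indicator {0..x} s \<partial>lborel) = ennreal (x\<^sup>2)" if "0 \<le> x" for x :: real
    using that by (subst nn_integral_FTC_Icc[where F="\<lambda>s. s\<^sup>2"]) (auto intro!: derivative_eq_intros)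
  have "(\<integral>\<^sup>+z. ennreal (std_cgauss_density z * (cmod z)\<^sup>2) \<partial>lborel)
      = ennreal (1 / pi) * (\<integral>\<^sup>+z. ennreal (exp (- (cmod z)\<^sup>2))
          * (\<integral>\<^sup>+s. ennreal (2 * s) * indicator {0..cmod z} s \<partial>lborel) \<partial>(lborel::complex measure))"
    by (subst nn_integral_cmult[symmetric])
      (auto intro!: nn_integral_cong simp: sq std_cgauss_density_def ennreal_mult[symmetric])
  also have "\<dots> = ennreal (1 / pi) * (\<integral>\<^sup>+s. ennreal (2 * s) * indicator {0..} s * ennreal (pi * exp (- s\<^sup>2)) \<partial>lborel)"
    by (subst nn_integral_exp_neg_cmod_sq_layer_cake) auto
  also have "\<dots> = (\<integral>\<^sup>+s. ennreal (2 * s * exp (- s\<^sup>2)) * indicator {0..} s \<partial>lborel)"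
    by (subst nn_integral_cmult[symmetric])
      (auto intro!: nn_integral_cong simp: ennreal_mult[symmetric] split: split_indicator)
  also have "\<dots> = 1"
    by (subst nn_integral_Rayleigh_tail) auto
  finally show "(\<integral>\<^sup>+z. ennreal (std_cgauss_density z * (cmod z)\<^sup>2) \<partial>lborel) = ennreal 1"
    by simp
qed auto

lemma has_bochner_integral_std_cgauss_id:
  "has_bochner_integral lborel (\<lambda>z. std_cgauss_density z *\<^sub>R z) 0"
proof -
  let ?f = "\<lambda>z::complex. std_cgauss_density z *\<^sub>R z"
  have "integrable lborel (\<lambda>z. norm (?f z))"
    using has_bochner_integral_std_cgauss_cmod by (simp add: has_bochner_integral_iff)
  then have "integrable lborel ?f"
    by (subst (asm) integrable_norm_iff) auto
  moreover have "(lborel :: complex measure) = distr lborel borel uminus"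
    using lborel_affine[of "-1" "0::complex"] by (simp add: density_1)
  then have "integral\<^sup>L lborel ?f = (\<integral>z. ?f (- z) \<partial>lborel)"
    by (subst (1) \<open>lborel = _\<close>) (rule integral_distr; simp)
  then have "integral\<^sup>L lborel ?f = 0"
    by (simp add: std_cgauss_density_def)
  ultimately show ?thesis
    by (simp add: has_bochner_integral_iff)
qed

lemma has_bochner_integral_distributed_std_cgauss:
  fixes h :: "complex \<Rightarrow> 'b::{banach, second_countable_topology}"
  assumes X: "distributed M lborel X (\<lambda>z. ennreal (std_cgauss_density z))"
    and [measurable]: "h \<in> borel_measurable borel"
    and "has_bochner_integral lborel (\<lambda>z. std_cgauss_density z *\<^sub>R h z) c"
  shows "has_bochner_integral M (\<lambda>\<omega>. h (X \<omega>)) c"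
proof -
  have "has_bochner_integral (distr M lborel X) h c"
    using X assms(3) by (simp add: distributed_def has_bochner_integral_density)
  then show ?thesis
    using distributed_measurable[OF X]
    by (simp add: has_bochner_integral_iff integrable_distr_eq integral_distr)
qed

section \<open>Deterministic bounds on the beam gain\<close>

lemma norm_steering [simp]: "cmod (steering dhat lam N \<theta> n) = 1"
  by (simp add: steering_def)

lemma beam_gain_nonneg: "0 \<le> beam_gain G dhat lam N Mt \<theta> \<phi>"
  unfolding beam_gain_def by (intro sum_nonneg) auto

lemma beam_gain_le_sum_cmod_sq:
  "beam_gain G dhat lam N Mt \<theta> \<phi> \<le> real N * (\<Sum>k=1..Mt. \<Sum>n=1..N. (cmod (G n k))\<^sup>2)"
proof -
  have "(cmod (\<Sum>n=1..N. G n k * cis (\<phi> n) * steering dhat lam N \<theta> n))\<^sup>2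
      \<le> real N * (\<Sum>n=1..N. (cmod (G n k))\<^sup>2)" for k
  proof -
    have "cmod (\<Sum>n=1..N. G n k * cis (\<phi> n) * steering dhat lam N \<theta> n) \<le> (\<Sum>n=1..N. cmod (G n k))"
      using norm_sum[of "\<lambda>n. G n k * cis (\<phi> n) * steering dhat lam N \<theta> n" "{1..N}"]
      by (simp add: norm_mult)
    then have "(cmod (\<Sum>n=1..N. G n k * cis (\<phi> n) * steering dhat lam N \<theta> n))\<^sup>2 \<le> (\<Sum>n=1..N. cmod (G n k))\<^sup>2"
      by (simp add: power_mono)
    also have "\<dots> \<le> real N * (\<Sum>n=1..N. (cmod (G n k))\<^sup>2)"
      using sum_squared_le_sum_of_squares[of "\<lambda>n. cmod (G n k)" "{1..N}"] by (simp add: mult.commute)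
    finally show ?thesis .
  qed
  then show ?thesis
    unfolding beam_gain_def sum_distrib_left by (rule sum_mono)
qed

lemma bdd_above_beam_gain: "bdd_above (range (beam_gain G dhat lam N Mt \<theta>))"
  using beam_gain_le_sum_cmod_sq by (intro bdd_aboveI) blast

lemma beam_gain_le_gamma2_star: "beam_gain G dhat lam N Mt \<theta> \<phi> \<le> gamma2_star G dhat lam N Mt \<theta>"
  unfolding gamma2_star_def by (rule cSUP_upper[OF _ bdd_above_beam_gain]) simp

lemma gamma2_star_nonneg: "0 \<le> gamma2_star G dhat lam N Mt \<theta>"
  using beam_gain_nonneg beam_gain_le_gamma2_star order_trans by blast

lemma gamma2_star_le_sum_cmod_sq:
  "gamma2_star G dhat lam N Mt \<theta> \<le> real N * (\<Sum>k=1..Mt. \<Sum>n=1..N. (cmod (G n k))\<^sup>2)"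
  unfolding gamma2_star_def by (rule cSUP_least[OF UNIV_not_empty beam_gain_le_sum_cmod_sq])

lemma unit_phase_gain_le_gamma2_star:
  assumes "\<And>n. cmod (u n) = 1"
  shows "(\<Sum>k=1..Mt. (cmod (\<Sum>n=1..N. G n k * u n))\<^sup>2) \<le> gamma2_star G dhat lam N Mt \<theta>"
proof -
  define \<phi> where "\<phi> n = Arg (u n) - pi * (2 * real n - real N - 1) * dhat * sin \<theta> / lam" for n
  have "cis (\<phi> n) * steering dhat lam N \<theta> n = u n" for n
  proof -
    have "u n \<noteq> 0"
      using assms[of n] by auto
    then show ?thesis
      using assms[of n] by (simp add: \<phi>_def steering_def cis_mult cis_Arg sgn_eq)
  qed
  then have "(\<Sum>k=1..Mt. (cmod (\<Sum>n=1..N. G n k * u n))\<^sup>2) = beam_gain G dhat lam N Mt \<theta> \<phi>"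
    by (simp add: beam_gain_def mult.assoc)
  then show ?thesis
    using beam_gain_le_gamma2_star by simp
qed

section \<open>Measurability of the maximal gain\<close>

definition rat_vector :: "nat \<times> int list \<Rightarrow> nat \<Rightarrow> real" where
  "rat_vector p n = real_of_int (snd p ! n) / real (Suc (fst p))"

lemma floor_mult_Suc_div_LIMSEQ: "(\<lambda>m. real_of_int \<lfloor>x * real (Suc m)\<rfloor> / real (Suc m)) \<longlonglongrightarrow> x"
proof (rule tendsto_sandwich[where f="\<lambda>m. x - 1 / real (Suc m)" and h="\<lambda>m. x"])
  have "x - 1 / real (Suc m) \<le> real_of_int \<lfloor>x * real (Suc m)\<rfloor> / real (Suc m)"
    and "real_of_int \<lfloor>x * real (Suc m)\<rfloor> / real (Suc m) \<le> x" for m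
  proof -
    have "x * real (Suc m) - 1 \<le> real_of_int \<lfloor>x * real (Suc m)\<rfloor>"
      and "real_of_int \<lfloor>x * real (Suc m)\<rfloor> \<le> x * real (Suc m)"
      by linarith+
    moreover have "x - 1 / real (Suc m) = (x * real (Suc m) - 1) / real (Suc m)"
      by (simp add: diff_divide_distrib)
    ultimately show "x - 1 / real (Suc m) \<le> real_of_int \<lfloor>x * real (Suc m)\<rfloor> / real (Suc m)"
      and "real_of_int \<lfloor>x * real (Suc m)\<rfloor> / real (Suc m) \<le> x"
      by (simp_all add: divide_right_mono pos_divide_le_eq)
  qed
  then show "\<forall>\<^sub>F m in sequentially. x - 1 / real (Suc m) \<le> real_of_int \<lfloor>x * real (Suc m)\<rfloor> / real (Suc m)"
    and "\<forall>\<^sub>F m in sequentially. real_of_int \<lfloor>x * real (Suc m)\<rfloor> / real (Suc m) \<le> x"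
    by (auto intro: always_eventually)
  show "(\<lambda>m. x - 1 / real (Suc m)) \<longlonglongrightarrow> x"
    by real_asymp
qed simp

lemma SUP_eq_SUP_rat_vector:
  fixes F :: "(nat \<Rightarrow> real) \<Rightarrow> real"
  assumes bdd: "bdd_above (range F)"
    and local: "\<And>\<phi> \<psi>. (\<And>n. n \<le> K \<Longrightarrow> \<phi> n = \<psi> n) \<Longrightarrow> F \<phi> = F \<psi>"
    and cont: "\<And>\<Phi> \<phi>. (\<And>n. (\<lambda>m. \<Phi> m n) \<longlonglongrightarrow> \<phi> n) \<Longrightarrow> (\<lambda>m. F (\<Phi> m)) \<longlonglongrightarrow> F \<phi>"
  shows "(SUP \<phi>. F \<phi>) = (SUP p. F (rat_vector p))"
proof (rule antisym)
  have bdd_rat: "bdd_above (range (\<lambda>p. F (rat_vector p)))"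
    using bdd by (rule bdd_above_mono) auto
  show "(SUP \<phi>. F \<phi>) \<le> (SUP p. F (rat_vector p))"
  proof (rule cSUP_least)
    fix \<phi>
    define p where "p m = (m, map (\<lambda>n. \<lfloor>\<phi> n * real (Suc m)\<rfloor>) [0..<Suc K])" for m
    have "F (rat_vector (p m)) = F (\<lambda>n. real_of_int \<lfloor>\<phi> n * real (Suc m)\<rfloor> / real (Suc m))" for m
      by (rule local) (auto simp: rat_vector_def p_def nth_map simp del: upt_Suc)
    moreover have "(\<lambda>m. F (\<lambda>n. real_of_int \<lfloor>\<phi> n * real (Suc m)\<rfloor> / real (Suc m))) \<longlonglongrightarrow> F \<phi>"
      by (rule cont) (rule floor_mult_Suc_div_LIMSEQ)
    ultimately have "(\<lambda>m. F (rat_vector (p m))) \<longlonglongrightarrow> F \<phi>"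
      by simp
    then show "F \<phi> \<le> (SUP p. F (rat_vector p))"
      by (rule LIMSEQ_le_const2) (auto intro: cSUP_upper[OF _ bdd_rat])
  qed simp
  show "(SUP p. F (rat_vector p)) \<le> (SUP \<phi>. F \<phi>)"
    by (rule cSUP_least) (auto intro: cSUP_upper[OF _ bdd])
qed

lemma borel_measurable_beam_gain:
  assumes "\<And>n k. n \<in> {1..N} \<Longrightarrow> k \<in> {1..Mt} \<Longrightarrow> (\<lambda>\<omega>. G \<omega> n k) \<in> borel_measurable M"
  shows "(\<lambda>\<omega>. beam_gain (G \<omega>) dhat lam N Mt \<theta> \<phi>) \<in> borel_measurable M"
  unfolding beam_gain_def
proof (intro borel_measurable_sum)
  fix k
  assume k: "k \<in> {1..Mt}"
  have "(\<lambda>\<omega>. \<Sum>n=1..N. G \<omega> n k * cis (\<phi> n) * steering dhat lam N \<theta> n) \<in> borel_measurable M"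
  proof (intro borel_measurable_sum)
    fix n
    assume "n \<in> {1..N}"
    with k have [measurable]: "(\<lambda>\<omega>. G \<omega> n k) \<in> borel_measurable M"
      by (intro assms)
    show "(\<lambda>\<omega>. G \<omega> n k * cis (\<phi> n) * steering dhat lam N \<theta> n) \<in> borel_measurable M"
      by measurable
  qed
  then show "(\<lambda>\<omega>. (cmod (\<Sum>n=1..N. G \<omega> n k * cis (\<phi> n) * steering dhat lam N \<theta> n))\<^sup>2) \<in> borel_measurable M"
    by measurable
qed

lemma borel_measurable_gamma2_star:
  assumes "\<And>n k. n \<in> {1..N} \<Longrightarrow> k \<in> {1..Mt} \<Longrightarrow> (\<lambda>\<omega>. G \<omega> n k) \<in> borel_measurable M"
  shows "(\<lambda>\<omega>. gamma2_star (G \<omega>) dhat lam N Mt \<theta>) \<in> borel_measurable M"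
proof -
  have "gamma2_star (G \<omega>) dhat lam N Mt \<theta> = (SUP p. beam_gain (G \<omega>) dhat lam N Mt \<theta> (rat_vector p))" for \<omega>
    unfolding gamma2_star_def
  proof (rule SUP_eq_SUP_rat_vector[where K=N])
    show "beam_gain (G \<omega>) dhat lam N Mt \<theta> \<phi> = beam_gain (G \<omega>) dhat lam N Mt \<theta> \<psi>"
      if "\<And>n. n \<le> N \<Longrightarrow> \<phi> n = \<psi> n" for \<phi> \<psi>
      unfolding beam_gain_def using that by (intro sum.cong refl arg_cong[where f="\<lambda>x. (cmod x)\<^sup>2"]) auto
    show "(\<lambda>m. beam_gain (G \<omega>) dhat lam N Mt \<theta> (\<Phi> m)) \<longlonglongrightarrow> beam_gain (G \<omega>) dhat lam N Mt \<theta> \<phi>"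
      if "\<And>n. (\<lambda>m. \<Phi> m n) \<longlonglongrightarrow> \<phi> n" for \<Phi> \<phi>
      unfolding beam_gain_def by (intro tendsto_intros that)
  qed (rule bdd_above_beam_gain)
  moreover have "(\<lambda>\<omega>. SUP p. beam_gain (G \<omega>) dhat lam N Mt \<theta> (rat_vector p)) \<in> borel_measurable M"
  proof (rule borel_measurable_cSUP)
    show "bdd_above (range (\<lambda>p. beam_gain (G \<omega>) dhat lam N Mt \<theta> (rat_vector p)))" for \<omega>
      using bdd_above_beam_gain by (rule bdd_above_mono) auto
  qed (auto intro: borel_measurable_beam_gain[OF assms])
  ultimately show ?thesis
    by simp
qed

section \<open>The co-phasing beamformer\<close>

definition cophase :: "complex \<Rightarrow> complex" where
  "cophase z = (if z = 0 then 1 else cnj (sgn z))"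

lemma norm_cophase [simp]: "cmod (cophase z) = 1"
  by (simp add: cophase_def norm_sgn)

lemma mult_cophase: "z * cophase z = complex_of_real (cmod z)"
proof (cases "z = 0")
  case False
  have "z * cnj z = complex_of_real ((cmod z)\<^sup>2)"
    by (rule complex_norm_square[symmetric])
  with False show ?thesis
    by (simp add: cophase_def sgn_eq field_simps power2_eq_square)
qed (simp add: cophase_def)

lemma borel_measurable_cophase [measurable]: "cophase \<in> borel_measurable borel"
proof -
  have [measurable]: "cnj \<in> borel_measurable borel"
    by (intro borel_measurable_continuous_onI continuous_intros)
  show ?thesis
    unfolding cophase_def[abs_def] sgn_eq by measurable
qed

definition cophased_gain :: "(nat \<Rightarrow> nat \<Rightarrow> complex) \<Rightarrow> nat \<Rightarrow> nat \<Rightarrow> real" where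
  "cophased_gain G N Mt = (\<Sum>k=1..Mt. (cmod (\<Sum>n=1..N. G n k * cophase (G n 1)))\<^sup>2)"

lemma cophased_gain_le_gamma2_star: "cophased_gain G N Mt \<le> gamma2_star G dhat lam N Mt \<theta>"
  unfolding cophased_gain_def by (rule unit_phase_gain_le_gamma2_star) simp

lemma sum_sum_if_eq:
  fixes c :: "'a::comm_ring_1"
  assumes "finite A"
  shows "(\<Sum>n\<in>A. \<Sum>m\<in>A. if n = m then 1 else c) = of_nat (card A) * (1 + (of_nat (card A) - 1) * c)"
proof -
  have "(\<Sum>m\<in>A. if n = m then 1 else c) = (\<Sum>m\<in>A. c + (if n = m then 1 - c else 0))" for n
    by (intro sum.cong) auto
  then have "(\<Sum>m\<in>A. if n = m then 1 else c) = 1 + (of_nat (card A) - 1) * c" if "n \<in> A" for n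
    using assms that by (simp add: sum.distrib algebra_simps)
  then have "(\<Sum>n\<in>A. \<Sum>m\<in>A. if n = m then 1 else c) = (\<Sum>n\<in>A. 1 + (of_nat (card A) - 1) * c)"
    by (rule sum.cong[OF refl])
  then show ?thesis
    by simp
qed

lemma (in prob_space) has_bochner_integral_indep_vars_prod:
  fixes X :: "'i \<Rightarrow> 'a \<Rightarrow> 'b::topological_space"
    and h :: "'i \<Rightarrow> 'b \<Rightarrow> 'c::{real_normed_field, banach, second_countable_topology}"
  assumes "indep_vars (\<lambda>_. borel) X I" "J \<subseteq> I" "finite J"
    and "\<And>i. i \<in> J \<Longrightarrow> h i \<in> borel_measurable borel"
    and "\<And>i. i \<in> J \<Longrightarrow> has_bochner_integral M (\<lambda>\<omega>. h i (X i \<omega>)) (c i)"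
  shows "has_bochner_integral M (\<lambda>\<omega>. \<Prod>i\<in>J. h i (X i \<omega>)) (\<Prod>i\<in>J. c i)"
proof -
  have "indep_vars (\<lambda>_. borel) (\<lambda>i \<omega>. h i (X i \<omega>)) J"
    using indep_vars_subset[OF assms(1,2)] by (rule indep_vars_compose2) (use assms(4) in auto)
  then show ?thesis
    using assms(3,5)
    by (simp add: has_bochner_integral_iff indep_vars_lebesgue_integral indep_vars_integrable)
qed

locale std_cgauss_matrix = prob_space M for M :: "'w measure" +
  fixes G :: "'w \<Rightarrow> nat \<Rightarrow> nat \<Rightarrow> complex" and N Mt :: nat
  assumes indep_entries: "indep_vars (\<lambda>_. borel) (\<lambda>nk \<omega>. G \<omega> (fst nk) (snd nk)) ({1..N} \<times> {1..Mt})"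
    and distributed_entries: "\<And>n k. n \<in> {1..N} \<Longrightarrow> k \<in> {1..Mt} \<Longrightarrow>
      distributed M lborel (\<lambda>\<omega>. G \<omega> n k) (\<lambda>z. ennreal (std_cgauss_density z))"
begin

lemma borel_measurable_entry: "n \<in> {1..N} \<Longrightarrow> k \<in> {1..Mt} \<Longrightarrow> (\<lambda>\<omega>. G \<omega> n k) \<in> borel_measurable M"
  using distributed_measurable[OF distributed_entries] by simp

lemma has_bochner_integral_entry:
  assumes "n \<in> {1..N}" "k \<in> {1..Mt}"
  shows "has_bochner_integral M (\<lambda>\<omega>. G \<omega> n k) 0"
  using has_bochner_integral_distributed_std_cgauss[OF distributed_entries[OF assms] _ has_bochner_integral_std_cgauss_id]
  by simp

lemma has_bochner_integral_cmod_entry: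
  assumes "n \<in> {1..N}" "k \<in> {1..Mt}"
  shows "has_bochner_integral M (\<lambda>\<omega>. cmod (G \<omega> n k)) (sqrt pi / 2)"
  using has_bochner_integral_distributed_std_cgauss[OF distributed_entries[OF assms], of cmod]
    has_bochner_integral_std_cgauss_cmod
  by simp

lemma has_bochner_integral_cmod_sq_entry:
  assumes "n \<in> {1..N}" "k \<in> {1..Mt}"
  shows "has_bochner_integral M (\<lambda>\<omega>. (cmod (G \<omega> n k))\<^sup>2) 1"
  using has_bochner_integral_distributed_std_cgauss[OF distributed_entries[OF assms], of "\<lambda>z. (cmod z)\<^sup>2"]
    has_bochner_integral_std_cgauss_cmod_sq
  by simp

lemma has_bochner_integral_sum_cmod_sq:
  "has_bochner_integral M (\<lambda>\<omega>. real N * (\<Sum>k=1..Mt. \<Sum>n=1..N. (cmod (G \<omega> n k))\<^sup>2)) (real Mt * (real N)\<^sup>2)"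
proof -
  have "has_bochner_integral M (\<lambda>\<omega>. real N * (\<Sum>k=1..Mt. \<Sum>n=1..N. (cmod (G \<omega> n k))\<^sup>2))
      (real N * (\<Sum>k=1..Mt. \<Sum>n=1..N. 1))"
    by (intro has_bochner_integral_mult_right has_bochner_integral_sum has_bochner_integral_cmod_sq_entry) auto
  then show ?thesis
    by (simp add: power2_eq_square mult_ac)
qed

definition cophased :: "nat \<Rightarrow> nat \<Rightarrow> 'w \<Rightarrow> complex" where
  "cophased k n \<omega> = G \<omega> n k * cophase (G \<omega> n 1)"

lemma has_bochner_integral_cophased_sq:
  assumes "n \<in> {1..N}" "k \<in> {1..Mt}"
  shows "has_bochner_integral M (\<lambda>\<omega>. cophased k n \<omega> * cnj (cophased k n \<omega>)) 1"
proof -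
  have "cophased k n \<omega> * cnj (cophased k n \<omega>) = complex_of_real ((cmod (cophased k n \<omega>))\<^sup>2)" for \<omega>
    by (simp only: complex_norm_square)
  moreover have "cmod (cophased k n \<omega>) = cmod (G \<omega> n k)" for \<omega>
    by (simp add: cophased_def norm_mult)
  ultimately show ?thesis
    using has_bochner_integral_of_real[OF has_bochner_integral_cmod_sq_entry[OF assms]] by simp
qed

lemma has_bochner_integral_cophased_first_column:
  assumes "n \<in> {1..N}" "m \<in> {1..N}" "n \<noteq> m" "0 < Mt"
  shows "has_bochner_integral M (\<lambda>\<omega>. cophased 1 n \<omega> * cnj (cophased 1 m \<omega>)) (complex_of_real (pi / 4))"
proof -
  define h where "h (i :: nat \<times> nat) z = complex_of_real (cmod z)" for i z
  have "has_bochner_integral M (\<lambda>\<omega>. \<Prod>i\<in>{(n, 1), (m, 1)}. h i (G \<omega> (fst i) (snd i)))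
      (\<Prod>i\<in>{(n, 1 :: nat), (m, 1)}. complex_of_real (sqrt pi / 2))"
  proof (rule has_bochner_integral_indep_vars_prod[OF indep_entries])
    show "has_bochner_integral M (\<lambda>\<omega>. h i (G \<omega> (fst i) (snd i))) (complex_of_real (sqrt pi / 2))"
      if "i \<in> {(n, 1), (m, 1)}" for i
      using that assms unfolding h_def
      by (auto intro!: has_bochner_integral_of_real has_bochner_integral_cmod_entry simp del: of_real_divide)
  qed (use assms in \<open>auto simp: h_def\<close>)
  moreover have "(sqrt pi / 2)\<^sup>2 = pi / 4"
    by (simp add: power_divide)
  ultimately show ?thesis
    using assms(3) by (simp add: h_def cophased_def mult_cophase power2_eq_square flip: of_real_mult)
qed

lemma has_bochner_integral_cophased_other_column:
  assumes "n \<in> {1..N}" "m \<in> {1..N}" "n \<noteq> m" "k \<in> {1..Mt}" "k \<noteq> 1"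
  shows "has_bochner_integral M (\<lambda>\<omega>. cophased k n \<omega> * cnj (cophased k m \<omega>)) 0"
proof -
  define h where "h i z = (if i = (n, k) then z else if i = (m, k) then cnj z
      else if i = (n, 1) then cophase z else cnj (cophase z))" for i :: "nat \<times> nat" and z
  let ?J = "{(n, k), (m, k), (n, 1), (m, 1)}"
  have [measurable]: "cnj \<in> borel_measurable borel"
    by (intro borel_measurable_continuous_onI continuous_intros)
  have factor: "cophased k n \<omega> * cnj (cophased k m \<omega>) = (\<Prod>i\<in>?J. h i (G \<omega> (fst i) (snd i)))" for \<omega>
    using assms by (simp add: cophased_def h_def mult_ac)
  have integral: "has_bochner_integral M (\<lambda>\<omega>. \<Prod>i\<in>?J. h i (G \<omega> (fst i) (snd i)))
      (\<Prod>i\<in>?J. integral\<^sup>L M (\<lambda>\<omega>. h i (G \<omega> (fst i) (snd i))))"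
  proof (rule has_bochner_integral_indep_vars_prod[OF indep_entries])
    fix i
    assume i: "i \<in> ?J"
    show "h i \<in> borel_measurable borel"
      unfolding h_def by measurable
    have "integrable M (\<lambda>\<omega>. G \<omega> j k)" if "j \<in> {n, m}" for j
      using that assms has_bochner_integral_entry[of j k] by (auto simp: has_bochner_integral_iff)
    moreover have "integrable M (\<lambda>\<omega>. cophase (G \<omega> j 1))" if "j \<in> {n, m}" for j
      using that assms borel_measurable_entry[of j 1] by (intro integrable_const_bound[where B=1]) auto
    ultimately have "integrable M (\<lambda>\<omega>. h i (G \<omega> (fst i) (snd i)))"
      using i assms by (auto simp: h_def)
    then show "has_bochner_integral M (\<lambda>\<omega>. h i (G \<omega> (fst i) (snd i))) (integral\<^sup>L M (\<lambda>\<omega>. h i (G \<omega> (fst i) (snd i))))"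
      by (simp add: has_bochner_integral_iff)
  qed (use assms in auto)
  have vanish: "(\<Prod>i\<in>?J. integral\<^sup>L M (\<lambda>\<omega>. h i (G \<omega> (fst i) (snd i)))) = 0"
  proof (rule prod_zero)
    show "\<exists>i\<in>?J. integral\<^sup>L M (\<lambda>\<omega>. h i (G \<omega> (fst i) (snd i))) = 0"
      using has_bochner_integral_entry[of n k] assms by (auto simp: h_def has_bochner_integral_iff)
  qed simp
  show ?thesis
    unfolding factor using integral unfolding vanish .
qed

lemma has_bochner_integral_cophased_column:
  assumes k: "k \<in> {1..Mt}"
  defines "c \<equiv> if k = 1 then pi / 4 else 0"
  shows "has_bochner_integral M (\<lambda>\<omega>. (cmod (\<Sum>n=1..N. cophased k n \<omega>))\<^sup>2) (real N * (1 + (real N - 1) * c))"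
proof -
  have "has_bochner_integral M (\<lambda>\<omega>. cophased k n \<omega> * cnj (cophased k m \<omega>)) (if n = m then 1 else of_real c)"
    if "n \<in> {1..N}" "m \<in> {1..N}" for n m
    using that k has_bochner_integral_cophased_sq has_bochner_integral_cophased_first_column[of n m]
      has_bochner_integral_cophased_other_column[of n m k]
    by (cases "n = m"; cases "k = 1") (auto simp: c_def)
  then have "has_bochner_integral M (\<lambda>\<omega>. \<Sum>n=1..N. \<Sum>m=1..N. cophased k n \<omega> * cnj (cophased k m \<omega>))
      (\<Sum>n=1..N. \<Sum>m=1..N. if n = m then 1 else of_real c)"
    by (intro has_bochner_integral_sum) auto
  then have "has_bochner_integral M (\<lambda>\<omega>. Re (\<Sum>n=1..N. \<Sum>m=1..N. cophased k n \<omega> * cnj (cophased k m \<omega>)))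
      (Re (\<Sum>n=1..N. \<Sum>m=1..N. if n = m then 1 else of_real c))"
    by (rule has_bochner_integral_Re)
  moreover have "Re (\<Sum>n=1..N. \<Sum>m=1..N. cophased k n \<omega> * cnj (cophased k m \<omega>))
      = (cmod (\<Sum>n=1..N. cophased k n \<omega>))\<^sup>2" for \<omega>
  proof -
    have "complex_of_real ((cmod (\<Sum>n=1..N. cophased k n \<omega>))\<^sup>2)
        = (\<Sum>n=1..N. \<Sum>m=1..N. cophased k n \<omega> * cnj (cophased k m \<omega>))"
      by (simp only: complex_norm_square cnj_sum sum_product)
    then show ?thesis
      by (metis Re_complex_of_real)
  qed
  moreover have "Re (\<Sum>n=1..N. \<Sum>m=1..N. if n = m then 1 else complex_of_real c) = real N * (1 + (real N - 1) * c)"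
    by (simp add: sum_sum_if_eq)
  ultimately show ?thesis
    by simp
qed

lemma has_bochner_integral_cophased_gain:
  assumes "0 < Mt"
  shows "has_bochner_integral M (\<lambda>\<omega>. cophased_gain (G \<omega>) N Mt) (pi * real N * (real N - 1) / 4 + real Mt * real N)"
proof -
  have "has_bochner_integral M (\<lambda>\<omega>. \<Sum>k=1..Mt. (cmod (\<Sum>n=1..N. cophased k n \<omega>))\<^sup>2)
      (\<Sum>k=1..Mt. real N * (1 + (real N - 1) * (if k = 1 then pi / 4 else 0)))"
    by (intro has_bochner_integral_sum has_bochner_integral_cophased_column) auto
  moreover have "(\<Sum>k=1..Mt. real N * (1 + (real N - 1) * (if k = 1 then pi / 4 else 0)))
      = (\<Sum>k=1..Mt. real N + (if k = 1 then pi * real N * (real N - 1) / 4 else 0))"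
    by (intro sum.cong) (auto simp: field_simps)
  moreover have "\<dots> = pi * real N * (real N - 1) / 4 + real Mt * real N"
    using assms by (simp add: sum.distrib)
  ultimately show ?thesis
    by (simp add: cophased_gain_def cophased_def)
qed

end

theorem proposition4:
  fixes M :: "'w measure" and G :: "'w \<Rightarrow> nat \<Rightarrow> nat \<Rightarrow> complex"
    and N Mt :: nat and dhat lam \<theta> :: real
  assumes "prob_space M"
    and "dhat > 0" and "lam > 0"
    and "N > 0" and "even N" and "Mt > 0"
    and "prob_space.indep_vars M (\<lambda>_. borel) (\<lambda>nk \<omega>. G \<omega> (fst nk) (snd nk))
           ({1..N} \<times> {1..Mt})"
    and "\<And>n k. n \<in> {1..N} \<Longrightarrow> k \<in> {1..Mt} \<Longrightarrow>
           distributed M lborel (\<lambda>\<omega>. G \<omega> n k) (\<lambda>z. ennreal (std_cgauss_density z))"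
  shows "integrable M (\<lambda>\<omega>. gamma2_star (G \<omega>) dhat lam N Mt \<theta>)
    \<and> pi * real N * (real N - 1) / 4 + real Mt * real N
        \<le> prob_space.expectation M (\<lambda>\<omega>. gamma2_star (G \<omega>) dhat lam N Mt \<theta>)
    \<and> prob_space.expectation M (\<lambda>\<omega>. gamma2_star (G \<omega>) dhat lam N Mt \<theta>)
        \<le> real Mt * (real N)\<^sup>2"
proof -
  interpret std_cgauss_matrix M G N Mt
    using assms(1,7,8) by (simp add: std_cgauss_matrix_def std_cgauss_matrix_axioms_def)
  let ?gain = "\<lambda>\<omega>. gamma2_star (G \<omega>) dhat lam N Mt \<theta>"
  note upper = has_bochner_integral_sum_cmod_sq
  note lower = has_bochner_integral_cophased_gain[OF \<open>Mt > 0\<close>]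
  have "integrable M ?gain"
  proof (rule Bochner_Integration.integrable_bound[OF integrable.intros[OF upper]])
    show "?gain \<in> borel_measurable M"
      by (intro borel_measurable_gamma2_star borel_measurable_entry)
  qed (use gamma2_star_nonneg gamma2_star_le_sum_cmod_sq in \<open>auto intro!: AE_I2 order_trans[OF _ abs_ge_self]\<close>)
  moreover have "expectation ?gain \<le> real Mt * (real N)\<^sup>2"
    using integral_mono[OF \<open>integrable M ?gain\<close> integrable.intros[OF upper]
        gamma2_star_le_sum_cmod_sq] upper
    by (simp add: has_bochner_integral_iff)
  moreover have "pi * real N * (real N - 1) / 4 + real Mt * real N \<le> expectation ?gain"
    using integral_mono[OF integrable.intros[OF lower] \<open>integrable M ?gain\<close>
        cophased_gain_le_gamma2_star] lower
    by (simp add: has_bochner_integral_iff)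
  ultimately show ?thesis
    by blast
qed

end
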